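(* Let $K,G:[0,\infty)\to\mathbb{R}$ be continuous, let $f$ solve $f''+Kf=0$ with $f>0$ on $(0,\infty)$ and $\int_1^\infty f(t)^{-2}dt<\infty$, and let $m$ solve $m''+Gm=0$ with $m(0)=f(0)$, $m'(0)=f'(0)$. Suppose the support of $G-K$ is contained in a bounded interval $[a,b]\subset[1,\infty)$, and assume $\alpha(m)<\infty$. Then $$\int_a^b|Gm-Kf|\,dt\le(\alpha(m)+1)\|G-K\|_2\,\|f|_{[a,b]}\|_2+\alpha(m)\int_a^b|f''|\,dt,$$ $$\int_b^\infty|Gm-Kf|\,dt\le\alpha(m)\int_b^\infty|f''|\,dt,$$ and consequently $$\int_0^\infty|Gm-Kf|\,dt\le\alpha(m)\int_a^\infty|f''|\,dt+(\alpha(m)+1)\|G-K\|_2\,\|f|_{[a,b]}\|_2.$$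
   Context: Notation: $\|G-K\|_2:=\sqrt{\int_0^\infty|G-K|^2dt}$; $\|f|_{[a,b]}\|_2:=\sqrt{\int_a^b f(t)^2dt}$; $\sigma(t):=m(t)/f(t)-1$ for $t>0$; $\alpha(m):=\sup_{t>0}|\sigma(t)|$. *)

theory Defs
  imports "HOL-Analysis.Analysis"
begin

definition sigma_fun :: "(real \<Rightarrow> real) \<Rightarrow> (real \<Rightarrow> real) \<Rightarrow> real \<Rightarrow> real" where
  "sigma_fun m f t = m t / f t - 1"

text \<open>alpha(m) = sup over t > 0 of |sigma(t)| (meaningful when this set is bounded above).\<close>
definition alpha_m :: "(real \<Rightarrow> real) \<Rightarrow> (real \<Rightarrow> real) \<Rightarrow> real" where
  "alpha_m m f = (SUP t\<in>{0<..}. \<bar>sigma_fun m f t\<bar>)"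

definition l2norm_on :: "real set \<Rightarrow> (real \<Rightarrow> real) \<Rightarrow> real" where
  "l2norm_on S g = sqrt (LINT t:S|lborel. (g t)\<^sup>2)"

end

theory Submission
  imports Defs
begin

text \<open>
  Put $D = Gm - Kf$.  On $[0,a)$ the functions $f$ and $m$ solve the same linear
  equation $y'' + Ky = 0$ with the same initial data, so $m = f$ there by an energy (Gronwall)
  argument and $D$ vanishes.  For $t > 0$ write $m = f(1+\<sigma>)$; using $f'' = -Kf$ one gets
  $D = (G-K) f (1+\<sigma>) - f''\<sigma>$, hence $|D| \<le> (1+\<alpha>)|G-K| f + \<alpha>|f''|$ with
  $\<alpha> = \<alpha>(m)$, and $|D| \<le> \<alpha>|f''|$ beyond $b$ where $G = K$.  Integrating over $[a,b]$
  with Cauchy--Schwarz for $\<integral>|G-K| f$, and over $[b,\<infinity>)$, gives the first two bounds;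
  the third one is their sum.
\<close>

text \<open>Pointwise growth bound for the energy $u^2+v^2$ of a solution of $u''=-ku$ with $|k| \<le> C$:
  its derivative $2uv + 2v(-ku)$ is at most $(1+C)(u^2+v^2)$.\<close>
lemma energy_growth_bound:
  fixes u v k C :: real
  assumes "\<bar>k\<bar> \<le> C"
  shows "2 * u * v + 2 * v * (- k * u) \<le> (1 + C) * (u\<^sup>2 + v\<^sup>2)"
proof -
  have "2 * u * v + 2 * v * (- k * u) = (2 * u * v) * (1 - k)" by (simp add: algebra_simps)
  also have "\<dots> \<le> \<bar>2 * u * v\<bar> * \<bar>1 - k\<bar>" by (metis abs_ge_self abs_mult)
  also have "\<dots> \<le> (u\<^sup>2 + v\<^sup>2) * (1 + C)"
  proof (rule mult_mono)
    show "\<bar>2 * u * v\<bar> \<le> u\<^sup>2 + v\<^sup>2"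
      using sum_squares_bound[of u v] sum_squares_bound[of u "-v"] by (auto simp: abs_if)
    show "\<bar>1 - k\<bar> \<le> 1 + C" using assms by linarith
  qed auto
  finally show ?thesis by (simp add: mult.commute)
qed

text \<open>Uniqueness for $u'' = -Ku$ on $[0,c]$ (Gronwall-type energy argument): zero initial data force
  $u(c)=0$, since $E(s) = (u^2+u'^2) e^{-(1+C)s}$ is non-increasing and $E(0)=0$.\<close>
lemma linear_ode_zero_initial_data:
  fixes K u u' u'' :: "real \<Rightarrow> real" and c :: real
  assumes contK: "continuous_on {0..c} K"
    and du: "\<And>t. t \<in> {0..c} \<Longrightarrow> (u has_real_derivative u' t) (at t within {0..c})"
    and du': "\<And>t. t \<in> {0..c} \<Longrightarrow> (u' has_real_derivative u'' t) (at t within {0..c})"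
    and ode: "\<And>t. t \<in> {0..c} \<Longrightarrow> u'' t = - K t * u t"
    and init: "u 0 = 0" "u' 0 = 0"
    and c: "0 \<le> c"
  shows "u c = 0"
proof -
  obtain C where C: "\<And>s. s \<in> {0..c} \<Longrightarrow> \<bar>K s\<bar> \<le> C"
    using compact_imp_bounded[OF compact_continuous_image[OF contK compact_Icc]]
    by (auto simp: bounded_iff) (metis atLeastAtMost_iff)
  define D where "D = 1 + C"
  define E where "E = (\<lambda>s. ((u s)\<^sup>2 + (u' s)\<^sup>2) * exp (- D * s))"
  define E' where "E' = (\<lambda>s. (2 * u s * u' s + 2 * u' s * u'' s) * exp (- D * s)
      - D * (((u s)\<^sup>2 + (u' s)\<^sup>2) * exp (- D * s)))"
  have dE: "(E has_real_derivative E' s) (at s within {0..c})" if "s \<in> {0..c}" for s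
    unfolding E_def E'_def
    by (rule derivative_eq_intros refl du du' that | simp add: algebra_simps)+
  have E'_nonpos: "E' s \<le> 0" if "s \<in> {0..c}" for s
  proof -
    have "2 * u s * u' s + 2 * u' s * u'' s \<le> D * ((u s)\<^sup>2 + (u' s)\<^sup>2)"
      using energy_growth_bound[OF C[OF that], of "u s" "u' s"] ode[OF that] by (simp add: D_def)
    then have "(2 * u s * u' s + 2 * u' s * u'' s) * exp (- D * s)
        \<le> D * ((u s)\<^sup>2 + (u' s)\<^sup>2) * exp (- D * s)"
      by (rule mult_right_mono) simp
    then show ?thesis
      unfolding E'_def by (simp add: algebra_simps)
  qed
  have "E c \<le> E 0"
  proof (rule DERIV_nonpos_imp_decreasing_open[OF c])
    fix x assume "0 < x" "x < c"
    then show "\<exists>y. (E has_real_derivative y) (at x) \<and> y \<le> 0"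
      using dE[of x] E'_nonpos[of x] by (auto simp: at_within_Icc_at)
  qed (rule DERIV_continuous_on[OF dE])
  then have "((u c)\<^sup>2 + (u' c)\<^sup>2) * exp (- D * c) \<le> 0"
    using init by (simp add: E_def)
  then have "(u c)\<^sup>2 + (u' c)\<^sup>2 \<le> 0" by (simp add: mult_le_0_iff)
  then show ?thesis by (simp add: sum_power2_le_zero_iff)
qed

text \<open>Two solutions of $y''+Ky=0$, $y''+Gy=0$ with equal initial data coincide as long as $G = K$;
  applied to the difference $m-f$.  This is why $Gm - Kf$ vanishes before the support of $G-K$.\<close>
lemma second_order_solutions_agree:
  fixes K G f f' f'' m m' m'' :: "real \<Rightarrow> real" and c :: real
  assumes contK: "continuous_on {0..} K"
    and df: "\<And>t. t \<ge> 0 \<Longrightarrow> (f has_real_derivative f' t) (at t within {0..})"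
    and df': "\<And>t. t \<ge> 0 \<Longrightarrow> (f' has_real_derivative f'' t) (at t within {0..})"
    and dm: "\<And>t. t \<ge> 0 \<Longrightarrow> (m has_real_derivative m' t) (at t within {0..})"
    and dm': "\<And>t. t \<ge> 0 \<Longrightarrow> (m' has_real_derivative m'' t) (at t within {0..})"
    and f_ode: "\<And>t. t \<ge> 0 \<Longrightarrow> f'' t + K t * f t = 0"
    and m_ode: "\<And>t. t \<ge> 0 \<Longrightarrow> m'' t + G t * m t = 0"
    and init: "m 0 = f 0" "m' 0 = f' 0"
    and same: "\<And>t. t \<in> {0..c} \<Longrightarrow> G t = K t"
    and c: "0 \<le> c"
  shows "m c = f c"
proof -
  have sub: "{0..c} \<subseteq> {0::real..}" by auto
  have "(\<lambda>t. m t - f t) c = 0"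
  proof (rule linear_ode_zero_initial_data[OF continuous_on_subset[OF contK sub]])
    fix t assume t: "t \<in> {0..c}"
    show "((\<lambda>t. m t - f t) has_real_derivative m' t - f' t) (at t within {0..c})"
      using t by (intro derivative_intros has_field_derivative_subset[OF _ sub] dm df) auto
    show "((\<lambda>t. m' t - f' t) has_real_derivative m'' t - f'' t) (at t within {0..c})"
      using t by (intro derivative_intros has_field_derivative_subset[OF _ sub] dm' df') auto
    show "m'' t - f'' t = - K t * (m t - f t)"
      using m_ode[of t] f_ode[of t] same[OF t] t by (simp add: algebra_simps)
  qed (use init c in auto)
  then show ?thesis by simp
qed

text \<open>The
  functions of the theorem are only known to be continuous on $[0,\<infinity>)$, so all integrands are
  handled in this restricted form.\<close>
lemma borel_measurable_restrict_continuous: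
  fixes h :: "real \<Rightarrow> real"
  assumes "continuous_on T h" "S \<in> sets borel" "S \<subseteq> T"
  shows "(\<lambda>t. ennreal (h t) * indicator S t) \<in> borel_measurable lborel"
proof -
  have "(\<lambda>t. indicator S t *\<^sub>R h t) \<in> borel_measurable borel"
    by (rule borel_measurable_continuous_on_indicator[OF assms(2) continuous_on_subset[OF assms(1,3)]])
  moreover have "(\<lambda>t. ennreal (h t) * indicator S t) = (\<lambda>t. ennreal (indicator S t *\<^sub>R h t))"
    by (auto simp: indicator_def)
  ultimately show ?thesis by simp
qed

lemma ennreal_le_of_square_le:
  fixes x :: ennreal and y :: real
  assumes "x\<^sup>2 \<le> (ennreal y)\<^sup>2" "0 \<le> y"
  shows "x \<le> ennreal y"
proof (cases x rule: ennreal_cases)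
  case (real r)
  with assms have "ennreal (r\<^sup>2) \<le> ennreal (y\<^sup>2)"
    by (simp only: ennreal_power)
  then have "r\<^sup>2 \<le> y\<^sup>2"
    using assms(2) by (simp add: ennreal_le_iff)
  then have "r \<le> y"
    using assms(2) by (rule power2_le_imp_le)
  then show ?thesis
    using real by (simp add: ennreal_leI)
next
  case top
  have "(ennreal y)\<^sup>2 < top"
    by (simp only: ennreal_power[OF assms(2)]) simp
  moreover have "x\<^sup>2 = top"
    using top by (simp add: power2_eq_square)
  ultimately show ?thesis
    using assms(1) by simp
qed

lemma nn_integral_square_Icc:
  fixes g :: "real \<Rightarrow> real"
  assumes "continuous_on {a..b} g"
  shows "(\<integral>\<^sup>+ t. (ennreal \<bar>g t\<bar> * indicator {a..b} t)\<^sup>2 \<partial>lborel) = ennreal (LINT t:{a..b}|lborel. (g t)\<^sup>2)"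
proof -
  have "set_integrable lborel {a..b} (\<lambda>t. (g t)\<^sup>2)"
    by (rule borel_integrable_atLeastAtMost') (intro continuous_intros assms)
  moreover have "(\<integral>\<^sup>+ t. (ennreal \<bar>g t\<bar> * indicator {a..b} t)\<^sup>2 \<partial>lborel)
      = (\<integral>\<^sup>+ t. ennreal (indicator {a..b} t *\<^sub>R (g t)\<^sup>2) \<partial>lborel)"
    by (rule nn_integral_cong) (auto simp: indicator_def ennreal_power[OF abs_ge_zero])
  ultimately show ?thesis
    unfolding set_lebesgue_integral_def
    by (simp add: nn_integral_eq_integral set_integrable_def)
qed

lemma l2norm_on_nonneg: "0 \<le> l2norm_on S g"
  unfolding l2norm_on_def set_lebesgue_integral_def by (simp add: integral_nonneg)

lemma cauchy_schwarz_Icc: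
  fixes g h :: "real \<Rightarrow> real"
  assumes cg: "continuous_on {a..b} g" and ch: "continuous_on {a..b} h"
    and h_nonneg: "\<And>t. t \<in> {a..b} \<Longrightarrow> 0 \<le> h t"
  shows "(\<integral>\<^sup>+ t\<in>{a..b}. ennreal (\<bar>g t\<bar> * h t) \<partial>lborel)
     \<le> ennreal (l2norm_on {a..b} g * l2norm_on {a..b} h)"
proof (rule ennreal_le_of_square_le)
  define F where "F = (\<lambda>t. ennreal \<bar>g t\<bar> * indicator {a..b} t)"
  define H where "H = (\<lambda>t. ennreal \<bar>h t\<bar> * indicator {a..b} t)"
  have "(\<integral>\<^sup>+ t\<in>{a..b}. ennreal (\<bar>g t\<bar> * h t) \<partial>lborel) = (\<integral>\<^sup>+ t. F t * H t \<partial>lborel)"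
    unfolding F_def H_def
    by (rule nn_integral_cong) (auto simp: indicator_def h_nonneg ennreal_mult)
  also have "(\<dots>)\<^sup>2 \<le> (\<integral>\<^sup>+ t. F t ^ 2 \<partial>lborel) * (\<integral>\<^sup>+ t. H t ^ 2 \<partial>lborel)"
  proof (rule Cauchy_Schwarz_nn_integral)
    show "F \<in> borel_measurable lborel" unfolding F_def
      by (rule borel_measurable_restrict_continuous[where h="\<lambda>t. \<bar>g t\<bar>"]) (auto intro!: continuous_intros cg)
    show "H \<in> borel_measurable lborel" unfolding H_def
      by (rule borel_measurable_restrict_continuous[where h="\<lambda>t. \<bar>h t\<bar>"]) (auto intro!: continuous_intros ch)
  qed
  also have "\<dots> = (ennreal (l2norm_on {a..b} g * l2norm_on {a..b} h))\<^sup>2"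
    unfolding F_def H_def nn_integral_square_Icc[OF cg] nn_integral_square_Icc[OF ch] l2norm_on_def
    by (simp add: ennreal_mult[symmetric] ennreal_power power_mult_distrib set_lebesgue_integral_def integral_nonneg)
  finally show "(\<integral>\<^sup>+ t\<in>{a..b}. ennreal (\<bar>g t\<bar> * h t) \<partial>lborel)\<^sup>2
      \<le> (ennreal (l2norm_on {a..b} g * l2norm_on {a..b} h))\<^sup>2" .
qed (simp add: l2norm_on_nonneg)

lemma l2norm_on_supported:
  assumes "T \<subseteq> S" "\<And>t. t \<in> S - T \<Longrightarrow> g t = 0"
  shows "l2norm_on S g = l2norm_on T g"
  unfolding l2norm_on_def set_lebesgue_integral_def
  using assms by (intro arg_cong[where f=sqrt] Bochner_Integration.integral_cong) (auto simp: indicator_def)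

lemma set_nn_integral_linear_bound:
  fixes u g h :: "real \<Rightarrow> real" and c d :: real
  assumes mg: "(\<lambda>t. ennreal (g t) * indicator S t) \<in> borel_measurable lborel"
    and mh: "(\<lambda>t. ennreal (h t) * indicator S t) \<in> borel_measurable lborel"
    and cd: "0 \<le> c" "0 \<le> d"
    and nonneg: "\<And>t. t \<in> S \<Longrightarrow> 0 \<le> g t \<and> 0 \<le> h t"
    and bound: "\<And>t. t \<in> S \<Longrightarrow> u t \<le> c * g t + d * h t"
  shows "(\<integral>\<^sup>+ t\<in>S. ennreal (u t) \<partial>lborel)
    \<le> ennreal c * (\<integral>\<^sup>+ t\<in>S. ennreal (g t) \<partial>lborel) + ennreal d * (\<integral>\<^sup>+ t\<in>S. ennreal (h t) \<partial>lborel)"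
proof -
  have "(\<integral>\<^sup>+ t\<in>S. ennreal (u t) \<partial>lborel)
      \<le> (\<integral>\<^sup>+ t. ennreal c * (ennreal (g t) * indicator S t) + ennreal d * (ennreal (h t) * indicator S t) \<partial>lborel)"
  proof (rule nn_integral_mono)
    fix t
    show "ennreal (u t) * indicator S t
        \<le> ennreal c * (ennreal (g t) * indicator S t) + ennreal d * (ennreal (h t) * indicator S t)"
    proof (cases "t \<in> S")
      case True
      have "ennreal (u t) \<le> ennreal (c * g t + d * h t)"
        by (rule ennreal_leI[OF bound[OF True]])
      also have "\<dots> = ennreal c * ennreal (g t) + ennreal d * ennreal (h t)"
        using cd nonneg[OF True] by (simp add: ennreal_plus ennreal_mult)
      finally show ?thesis using True by simp
    qed simp
  qed
  also have "\<dots> = ennreal c * (\<integral>\<^sup>+ t\<in>S. ennreal (g t) \<partial>lborel) + ennreal d * (\<integral>\<^sup>+ t\<in>S. ennreal (h t) \<partial>lborel)"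
    using mg mh by (simp only: nn_integral_add nn_integral_cmult borel_measurable_times_ennreal borel_measurable_const)
  finally show ?thesis .
qed

lemma set_nn_integral_Ici_Ioi:
  fixes g :: "real \<Rightarrow> ennreal" and b :: real
  shows "(\<integral>\<^sup>+ t\<in>{b..}. g t \<partial>lborel) = (\<integral>\<^sup>+ t\<in>{b<..}. g t \<partial>lborel)"
proof (rule nn_integral_cong_AE)
  show "AE t in lborel. g t * indicator {b..} t = g t * indicator {b<..} t"
    using AE_lborel_singleton[of b] by eventually_elim (auto simp: indicator_def)
qed

lemma set_nn_integral_split_Ici:
  fixes h :: "real \<Rightarrow> real"
  assumes "continuous_on {a..} h" "a \<le> b"
  shows "(\<integral>\<^sup>+ t\<in>{a..}. ennreal (h t) \<partial>lborel)
    = (\<integral>\<^sup>+ t\<in>{a..b}. ennreal (h t) \<partial>lborel) + (\<integral>\<^sup>+ t\<in>{b..}. ennreal (h t) \<partial>lborel)"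
proof -
  have meas: "(\<lambda>t. ennreal (h t) * indicator S t) \<in> borel_measurable lborel"
    if "S \<in> sets borel" "S \<subseteq> {a..}" for S
    using borel_measurable_restrict_continuous[OF assms(1) that] .
  have "(\<integral>\<^sup>+ t. ennreal (h t) * indicator {a..b} t + ennreal (h t) * indicator {b<..} t \<partial>lborel)
      = (\<integral>\<^sup>+ t\<in>{a..b}. ennreal (h t) \<partial>lborel) + (\<integral>\<^sup>+ t\<in>{b<..}. ennreal (h t) \<partial>lborel)"
    using assms(2) by (intro nn_integral_add meas) auto
  moreover have "(\<integral>\<^sup>+ t\<in>{a..}. ennreal (h t) \<partial>lborel)
      = (\<integral>\<^sup>+ t. ennreal (h t) * indicator {a..b} t + ennreal (h t) * indicator {b<..} t \<partial>lborel)"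
    using assms(2) by (intro nn_integral_cong) (auto simp: indicator_def)
  ultimately show ?thesis by (simp add: set_nn_integral_Ici_Ioi)
qed

lemma sigma_fun_le_alpha_m:
  assumes "bdd_above ((\<lambda>t. \<bar>sigma_fun m f t\<bar>) ` {0<..})" "0 < t"
  shows "\<bar>sigma_fun m f t\<bar> \<le> alpha_m m f"
  unfolding alpha_m_def by (rule cSUP_upper) (use assms in auto)

lemma sigma_fun_factor: "f t \<noteq> 0 \<Longrightarrow> m t = f t * (1 + sigma_fun m f t)"
  unfolding sigma_fun_def by (simp add: field_simps)

text \<open>Writing $m = f(1+\<sigma>)$ and $f'' = -Kf$ gives
  $Gm - Kf = (G-K) f (1+\<sigma>) - f''\<sigma>$, hence
  $|Gm - Kf| \<le> (1+\<alpha>)|G-K| f + \<alpha> |f''|$.\<close>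
lemma defect_pointwise_bound:
  fixes G K fv f2 mv \<sigma> \<alpha> :: real
  assumes "0 < fv" "f2 = - K * fv" "mv = fv * (1 + \<sigma>)" "\<bar>\<sigma>\<bar> \<le> \<alpha>"
  shows "\<bar>G * mv - K * fv\<bar> \<le> (1 + \<alpha>) * (\<bar>G - K\<bar> * fv) + \<alpha> * \<bar>f2\<bar>"
proof -
  have "G * mv - K * fv = (G - K) * fv * (1 + \<sigma>) - f2 * \<sigma>"
    using assms(2,3) by (simp add: algebra_simps)
  also have "\<bar>\<dots>\<bar> \<le> (\<bar>G - K\<bar> * fv) * \<bar>1 + \<sigma>\<bar> + \<bar>f2\<bar> * \<bar>\<sigma>\<bar>"
    using assms(1) by (simp add: abs_mult abs_triangle_ineq4[THEN order_trans])
  also have "\<dots> \<le> (\<bar>G - K\<bar> * fv) * (1 + \<alpha>) + \<bar>f2\<bar> * \<alpha>"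
    using assms(1,4) by (intro add_mono mult_left_mono) auto
  finally show ?thesis by (simp add: mult.commute)
qed

text \<open>Integrating the pointwise estimate over the support $[a,b]$ and applying Cauchy--Schwarz to
  the term $|G-K| f$ gives the first claimed inequality.\<close>
lemma defect_integral_on_support:
  fixes D g f f2 :: "real \<Rightarrow> real" and \<alpha> :: real
  assumes cg: "continuous_on {a..b} g" and cf: "continuous_on {a..b} f"
    and cf2: "continuous_on {a..b} f2"
    and f_nonneg: "\<And>t. t \<in> {a..b} \<Longrightarrow> 0 \<le> f t" and \<alpha>: "0 \<le> \<alpha>"
    and bound: "\<And>t. t \<in> {a..b} \<Longrightarrow> \<bar>D t\<bar> \<le> (1 + \<alpha>) * (\<bar>g t\<bar> * f t) + \<alpha> * \<bar>f2 t\<bar>"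
  shows "(\<integral>\<^sup>+ t\<in>{a..b}. ennreal \<bar>D t\<bar> \<partial>lborel)
    \<le> ennreal ((\<alpha> + 1) * l2norm_on {a..b} g * l2norm_on {a..b} f)
      + ennreal \<alpha> * (\<integral>\<^sup>+ t\<in>{a..b}. ennreal \<bar>f2 t\<bar> \<partial>lborel)"
proof -
  have "(\<integral>\<^sup>+ t\<in>{a..b}. ennreal \<bar>D t\<bar> \<partial>lborel)
      \<le> ennreal (1 + \<alpha>) * (\<integral>\<^sup>+ t\<in>{a..b}. ennreal (\<bar>g t\<bar> * f t) \<partial>lborel)
        + ennreal \<alpha> * (\<integral>\<^sup>+ t\<in>{a..b}. ennreal \<bar>f2 t\<bar> \<partial>lborel)"
  proof (rule set_nn_integral_linear_bound)
    show "(\<lambda>t. ennreal (\<bar>g t\<bar> * f t) * indicator {a..b} t) \<in> borel_measurable lborel"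
      by (rule borel_measurable_restrict_continuous[OF _ _ order.refl])
         (auto intro!: continuous_intros cg cf)
    show "(\<lambda>t. ennreal \<bar>f2 t\<bar> * indicator {a..b} t) \<in> borel_measurable lborel"
      by (rule borel_measurable_restrict_continuous[OF _ _ order.refl])
         (auto intro!: continuous_intros cf2)
  qed (use \<alpha> f_nonneg bound in auto)
  also have "\<dots> \<le> ennreal (1 + \<alpha>) * ennreal (l2norm_on {a..b} g * l2norm_on {a..b} f)
        + ennreal \<alpha> * (\<integral>\<^sup>+ t\<in>{a..b}. ennreal \<bar>f2 t\<bar> \<partial>lborel)"
    by (intro add_right_mono mult_left_mono cauchy_schwarz_Icc cg cf f_nonneg) auto
  also have "ennreal (1 + \<alpha>) * ennreal (l2norm_on {a..b} g * l2norm_on {a..b} f)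
      = ennreal ((\<alpha> + 1) * l2norm_on {a..b} g * l2norm_on {a..b} f)"
    using \<alpha> by (simp add: ennreal_mult l2norm_on_nonneg mult.assoc add.commute)
  finally show ?thesis .
qed

lemma defect_integral_tail:
  fixes D f2 :: "real \<Rightarrow> real" and \<alpha> :: real
  assumes cf2: "continuous_on {b..} f2" and \<alpha>: "0 \<le> \<alpha>"
    and bound: "\<And>t. b < t \<Longrightarrow> \<bar>D t\<bar> \<le> \<alpha> * \<bar>f2 t\<bar>"
  shows "(\<integral>\<^sup>+ t\<in>{b..}. ennreal \<bar>D t\<bar> \<partial>lborel) \<le> ennreal \<alpha> * (\<integral>\<^sup>+ t\<in>{b..}. ennreal \<bar>f2 t\<bar> \<partial>lborel)"
proof -
  have "(\<integral>\<^sup>+ t\<in>{b<..}. ennreal \<bar>D t\<bar> \<partial>lborel)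
      \<le> (\<integral>\<^sup>+ t. ennreal \<alpha> * (ennreal \<bar>f2 t\<bar> * indicator {b<..} t) \<partial>lborel)"
    using \<alpha> bound by (intro nn_integral_mono) (auto simp: indicator_def ennreal_mult[symmetric] ennreal_leI)
  also have "\<dots> = ennreal \<alpha> * (\<integral>\<^sup>+ t\<in>{b<..}. ennreal \<bar>f2 t\<bar> \<partial>lborel)"
    by (intro nn_integral_cmult borel_measurable_restrict_continuous[OF continuous_on_rabs[OF cf2]]) auto
  finally show ?thesis by (simp only: set_nn_integral_Ici_Ioi)
qed

lemma defect_integral_total:
  fixes D f2 :: "real \<Rightarrow> real" and C \<alpha> :: real
  assumes cD: "continuous_on {a..} D" and cf2: "continuous_on {a..} f2"
    and ab: "0 \<le> a" "a \<le> b"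
    and vanish: "\<And>t. 0 \<le> t \<Longrightarrow> t < a \<Longrightarrow> D t = 0"
    and support: "(\<integral>\<^sup>+ t\<in>{a..b}. ennreal \<bar>D t\<bar> \<partial>lborel)
        \<le> ennreal C + ennreal \<alpha> * (\<integral>\<^sup>+ t\<in>{a..b}. ennreal \<bar>f2 t\<bar> \<partial>lborel)"
    and tail: "(\<integral>\<^sup>+ t\<in>{b..}. ennreal \<bar>D t\<bar> \<partial>lborel)
        \<le> ennreal \<alpha> * (\<integral>\<^sup>+ t\<in>{b..}. ennreal \<bar>f2 t\<bar> \<partial>lborel)"
  shows "(\<integral>\<^sup>+ t\<in>{0..}. ennreal \<bar>D t\<bar> \<partial>lborel)
    \<le> ennreal \<alpha> * (\<integral>\<^sup>+ t\<in>{a..}. ennreal \<bar>f2 t\<bar> \<partial>lborel) + ennreal C"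
proof -
  have "(\<integral>\<^sup>+ t\<in>{0..}. ennreal \<bar>D t\<bar> \<partial>lborel) = (\<integral>\<^sup>+ t\<in>{a..}. ennreal \<bar>D t\<bar> \<partial>lborel)"
    using ab vanish by (intro nn_integral_cong) (auto simp: indicator_def)
  also have "\<dots> = (\<integral>\<^sup>+ t\<in>{a..b}. ennreal \<bar>D t\<bar> \<partial>lborel) + (\<integral>\<^sup>+ t\<in>{b..}. ennreal \<bar>D t\<bar> \<partial>lborel)"
    by (intro set_nn_integral_split_Ici continuous_on_rabs cD ab)
  also have "\<dots> \<le> ennreal C + ennreal \<alpha> * (\<integral>\<^sup>+ t\<in>{a..b}. ennreal \<bar>f2 t\<bar> \<partial>lborel)
      + ennreal \<alpha> * (\<integral>\<^sup>+ t\<in>{b..}. ennreal \<bar>f2 t\<bar> \<partial>lborel)"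
    by (rule add_mono[OF support tail])
  also have "\<dots> = ennreal \<alpha> * (\<integral>\<^sup>+ t\<in>{a..}. ennreal \<bar>f2 t\<bar> \<partial>lborel) + ennreal C"
    by (simp only: set_nn_integral_split_Ici[OF continuous_on_rabs[OF cf2] ab(2)] distrib_left add_ac)
  finally show ?thesis .
qed

theorem lemma2p4:
  fixes K G f f' f'' m m' m'' :: "real \<Rightarrow> real" and a b :: real
  assumes contK: "continuous_on {0..} K"
    and contG: "continuous_on {0..} G"
    and df: "\<And>t. t \<ge> 0 \<Longrightarrow> (f has_real_derivative f' t) (at t within {0..})"
    and df': "\<And>t. t \<ge> 0 \<Longrightarrow> (f' has_real_derivative f'' t) (at t within {0..})"
    and f_ode: "\<And>t. t \<ge> 0 \<Longrightarrow> f'' t + K t * f t = 0"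
    and f_pos: "\<And>t. t > 0 \<Longrightarrow> f t > 0"
    and f_int: "(\<integral>\<^sup>+ t\<in>{1..}. ennreal (1 / (f t)\<^sup>2) \<partial>lborel) < \<infinity>"
    and dm: "\<And>t. t \<ge> 0 \<Longrightarrow> (m has_real_derivative m' t) (at t within {0..})"
    and dm': "\<And>t. t \<ge> 0 \<Longrightarrow> (m' has_real_derivative m'' t) (at t within {0..})"
    and m_ode: "\<And>t. t \<ge> 0 \<Longrightarrow> m'' t + G t * m t = 0"
    and m0: "m 0 = f 0" and m'0: "m' 0 = f' 0"
    and ab: "1 \<le> a" "a \<le> b"
    and supp: "\<And>t. t \<ge> 0 \<Longrightarrow> t \<notin> {a..b} \<Longrightarrow> G t = K t"
    and alpha_fin: "bdd_above ((\<lambda>t. \<bar>sigma_fun m f t\<bar>) ` {0<..})"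
  shows "(\<integral>\<^sup>+ t\<in>{a..b}. ennreal \<bar>G t * m t - K t * f t\<bar> \<partial>lborel)
           \<le> ennreal ((alpha_m m f + 1) * l2norm_on {0..} (\<lambda>t. G t - K t) * l2norm_on {a..b} f)
             + ennreal (alpha_m m f) * (\<integral>\<^sup>+ t\<in>{a..b}. ennreal \<bar>f'' t\<bar> \<partial>lborel)
    \<and> (\<integral>\<^sup>+ t\<in>{b..}. ennreal \<bar>G t * m t - K t * f t\<bar> \<partial>lborel)
           \<le> ennreal (alpha_m m f) * (\<integral>\<^sup>+ t\<in>{b..}. ennreal \<bar>f'' t\<bar> \<partial>lborel)
    \<and> (\<integral>\<^sup>+ t\<in>{0..}. ennreal \<bar>G t * m t - K t * f t\<bar> \<partial>lborel)
           \<le> ennreal (alpha_m m f) * (\<integral>\<^sup>+ t\<in>{a..}. ennreal \<bar>f'' t\<bar> \<partial>lborel)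
             + ennreal ((alpha_m m f + 1) * l2norm_on {0..} (\<lambda>t. G t - K t) * l2norm_on {a..b} f)"
proof -
  define \<alpha> where "\<alpha> = alpha_m m f"
  define C where "C = (\<alpha> + 1) * l2norm_on {0..} (\<lambda>t. G t - K t) * l2norm_on {a..b} f"
  have \<sigma>_le: "\<bar>sigma_fun m f t\<bar> \<le> \<alpha>" if "0 < t" for t
    unfolding \<alpha>_def using sigma_fun_le_alpha_m[OF alpha_fin that] .
  have \<alpha>_nonneg: "0 \<le> \<alpha>" using \<sigma>_le[of 1] by linarith
  have cf: "continuous_on {0..} f" and cm: "continuous_on {0..} m"
    by (auto intro: DERIV_continuous_on df dm)
  have cf'': "continuous_on {0..} f''"
  proof (rule continuous_on_eq)
    show "continuous_on {0..} (\<lambda>t. - K t * f t)" by (intro continuous_intros contK cf)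
    show "- K t * f t = f'' t" if "t \<in> {0..}" for t using f_ode[of t] that by simp
  qed
  have cGK: "continuous_on {0..} (\<lambda>t. G t - K t)"
    and cD: "continuous_on {0..} (\<lambda>t. G t * m t - K t * f t)"
    by (intro continuous_intros contG contK cm cf)+
  have sub: "{a..b} \<subseteq> {0..}" "{a..} \<subseteq> {0..}" "{b..} \<subseteq> {0..}" using ab by auto
  have pointwise: "\<bar>G t * m t - K t * f t\<bar> \<le> (1 + \<alpha>) * (\<bar>G t - K t\<bar> * f t) + \<alpha> * \<bar>f'' t\<bar>"
    if "0 < t" for t
    using f_pos[OF that] f_ode[of t] that sigma_fun_factor[of f t m] \<sigma>_le[OF that]
    by (intro defect_pointwise_bound) (auto simp: algebra_simps)
  have beyond: "\<bar>G t * m t - K t * f t\<bar> \<le> \<alpha> * \<bar>f'' t\<bar>" if "b < t" for t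
    using pointwise[of t] supp[of t] that ab by simp
  have before: "G t * m t - K t * f t = 0" if "0 \<le> t" "t < a" for t
    using supp that second_order_solutions_agree[OF contK df df' dm dm' f_ode m_ode m0 m'0, of t]
    by auto
  have l2_GK: "l2norm_on {0..} (\<lambda>t. G t - K t) = l2norm_on {a..b} (\<lambda>t. G t - K t)"
    using ab supp by (intro l2norm_on_supported) auto
  have support: "(\<integral>\<^sup>+ t\<in>{a..b}. ennreal \<bar>G t * m t - K t * f t\<bar> \<partial>lborel)
      \<le> ennreal C + ennreal \<alpha> * (\<integral>\<^sup>+ t\<in>{a..b}. ennreal \<bar>f'' t\<bar> \<partial>lborel)"
    unfolding C_def l2_GK
    using ab f_pos pointwise \<alpha>_nonneg
    by (intro defect_integral_on_support continuous_on_subset[OF _ sub(1)] cGK cf cf'')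
       (auto intro: less_imp_le)
  have tail: "(\<integral>\<^sup>+ t\<in>{b..}. ennreal \<bar>G t * m t - K t * f t\<bar> \<partial>lborel)
      \<le> ennreal \<alpha> * (\<integral>\<^sup>+ t\<in>{b..}. ennreal \<bar>f'' t\<bar> \<partial>lborel)"
    by (rule defect_integral_tail[OF continuous_on_subset[OF cf'' sub(3)] \<alpha>_nonneg beyond])
  have total: "(\<integral>\<^sup>+ t\<in>{0..}. ennreal \<bar>G t * m t - K t * f t\<bar> \<partial>lborel)
      \<le> ennreal \<alpha> * (\<integral>\<^sup>+ t\<in>{a..}. ennreal \<bar>f'' t\<bar> \<partial>lborel) + ennreal C"
    using ab by (intro defect_integral_total[OF continuous_on_subset[OF cD sub(2)]
        continuous_on_subset[OF cf'' sub(2)] _ ab(2) before support tail]) auto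
  show ?thesis
    using support tail total unfolding C_def \<alpha>_def by (simp add: add.commute)
qed

end
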